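(* Let $3\leq m\leq n$, $\ell=m-1$. If $m\leq\rho(n-1)$, then $\mathfrak{C}\not\subset\mathfrak{S}$.
   Context: $\rho$ is the Hurwitz–Radon function: $\rho(k)=2^b+8c$ where $k=(2a+1)2^{b+4c}$, $a,b,c\geq0$ integers, $0\leq b<4$. For $Y=(Y_1;\ldots;Y_\ell)\in\mathbb{R}^{n\times n\times\ell}$ and $\mathbf{a}\in\mathbb{R}^m$, $M(\mathbf{a},Y)=\sum_{k=1}^\ell a_kY_k-a_mE_n$; $\mathfrak{C}=\{Y\mid\det M(\mathbf{a},Y)<0\text{ for some }\mathbf{a}\}$. $V(Y)=\{\mathbf{a}\in\mathbb{R}^n\mid \sum_{k=1}^\ell x_kY_k\mathbf{a}=x_m\mathbf{a}\text{ for some }(x_1,\ldots,x_m)^\top\neq\mathbf{0}\}$, $\hat V(Y)$ its linear span, $\mathfrak{S}=\{Y\mid\dim\hat V(Y)=n\}$. *)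

theory Defs
  imports "HOL-Analysis.Analysis"
begin

definition rho :: "nat \<Rightarrow> nat" where
  "rho k = (THE r. \<exists>a b c. k = (2*a+1) * 2^(b+4*c) \<and> b < 4 \<and> r = 2^b + 8*c)"

text \<open>Y = (Y_1; ...; Y_l) with l = m - 1 is given as a function on indices 1..l;
  a vector a in R^m is a function on indices 1..m.\<close>
definition Mmat :: "nat \<Rightarrow> (nat \<Rightarrow> real^'n^'n) \<Rightarrow> (nat \<Rightarrow> real) \<Rightarrow> real^'n^'n" where
  "Mmat m Y a = (\<Sum>k\<in>{1..m-1}. a k *\<^sub>R Y k) - a m *\<^sub>R mat 1"

definition setC :: "nat \<Rightarrow> (nat \<Rightarrow> real^'n^'n) set" where
  "setC m = {Y. \<exists>a. det (Mmat m Y a) < 0}"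

definition setV :: "nat \<Rightarrow> (nat \<Rightarrow> real^'n^'n) \<Rightarrow> (real^'n) set" where
  "setV m Y = {v. \<exists>x :: nat \<Rightarrow> real. (\<exists>i\<in>{1..m}. x i \<noteq> 0) \<and>
      (\<Sum>k\<in>{1..m-1}. x k *\<^sub>R Y k) *v v = x m *\<^sub>R v}"

definition setS :: "nat \<Rightarrow> (nat \<Rightarrow> real^'n^'n) set" where
  "setS m = {Y. dim (span (setV m Y)) = CARD('n)}"

end

theory Submission
  imports Defs "HOL-Computational_Algebra.Primes"
begin

(*
  Write n - 1 = 2^e * y with y odd, so that rho(n - 1) = 2^(e mod 4) + 8 (e div 4).
  The Hurwitz-Radon construction gives rho(n - 1) - 1 real (n-1) x (n-1) matrices that
  pairwise anticommute and square to -1; hence (x_1 A_1 + ... + x_d A_d)^2 = -|x|^2, and no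
  nonzero combination of them has a real eigenvector.  Padding each A_k by a zero row and column
  gives n x n matrices Y_1, ..., Y_(m-1); this uses m - 1 <= rho(n - 1) - 1.
   - The family has m - 1 >= 2 members, which forces e > 0; so n is odd and M(e_m, Y) = -1 has
     negative determinant: Y lies in C.
   - Every vector of V(Y) vanishes off the padding coordinate, so dim span V(Y) <= 1 < n:
     Y does not lie in S.
*)

section \<open>Letters: four signed permutations of a bit\<close>

text \<open>A letter acts on functions of a bit by (l f) b = letter_sign l b * f (letter_flip l b):
  Id2 is the identity, Rot the rotation by 90 degrees (squaring to -1), Diag = diag(1,-1)
  and Swap the transposition.\<close>

datatype letter = Id2 | Rot | Diag | Swap

fun letter_flip :: "letter \<Rightarrow> bool \<Rightarrow> bool" where
  "letter_flip Rot b = (\<not> b)"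
| "letter_flip Swap b = (\<not> b)"
| "letter_flip _ b = b"

fun letter_sign :: "letter \<Rightarrow> bool \<Rightarrow> real" where
  "letter_sign Rot b = (if b then -1 else 1)"
| "letter_sign Diag b = (if b then -1 else 1)"
| "letter_sign _ b = 1"

text \<open>The sign in the commutation relation l l' = comm_sign l l' * l' l, and the square of a letter.\<close>

definition comm_sign :: "letter \<Rightarrow> letter \<Rightarrow> real" where
  "comm_sign l l' = (if l \<noteq> Id2 \<and> l' \<noteq> Id2 \<and> l \<noteq> l' then -1 else 1)"

definition sq_sign :: "letter \<Rightarrow> real" where
  "sq_sign l = (if l = Rot then -1 else 1)"

lemma letter_flip_flip: "letter_flip l (letter_flip l b) = b"
  by (cases l) auto

lemma letter_flip_commute: "letter_flip l (letter_flip l' b) = letter_flip l' (letter_flip l b)"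
  by (cases l; cases l') auto

lemma letter_commutation:
  "letter_sign l b * letter_sign l' (letter_flip l b)
     = comm_sign l l' * letter_sign l' b * letter_sign l (letter_flip l' b)"
  by (cases l; cases l'; cases b) (auto simp: comm_sign_def)

lemma letter_square: "letter_sign l b * letter_sign l (letter_flip l b) = sq_sign l"
  by (cases l; cases b) (auto simp: sq_sign_def)

section \<open>Words: tensor products of letters\<close>

text \<open>A word of length L acts letterwise on bit strings of length L, i.e. as the tensor product
  of its letters on R^(2^L).  Its flips, overall sign, commutation sign and square are computed
  letterwise.\<close>

type_synonym word = "letter list"

fun flips :: "word \<Rightarrow> bool list \<Rightarrow> bool list" where
  "flips (l # s) (b # bs) = letter_flip l b # flips s bs"
| "flips _ bs = bs"

fun signs :: "word \<Rightarrow> bool list \<Rightarrow> real" where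
  "signs (l # s) (b # bs) = letter_sign l b * signs s bs"
| "signs _ _ = 1"

fun comm_signs :: "word \<Rightarrow> word \<Rightarrow> real" where
  "comm_signs (l # s) (l' # t) = comm_sign l l' * comm_signs s t"
| "comm_signs _ _ = 1"

definition sq_signs :: "word \<Rightarrow> real" where
  "sq_signs s = prod_list (map sq_sign s)"

lemma length_flips [simp]: "length (flips s bs) = length bs"
  by (induction s bs rule: flips.induct) auto

lemma flips_flips: "flips s (flips s bs) = bs"
  by (induction s bs rule: flips.induct) (auto simp: letter_flip_flip)

lemma flips_commute: "flips t (flips s bs) = flips s (flips t bs)"
proof (induction bs arbitrary: s t)
  case (Cons b bs)
  then show ?case by (cases s; cases t) (auto simp: letter_flip_commute)
qed simp

lemma signs_commutation:
  assumes "length s = length bs" and "length t = length bs"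
  shows "signs s bs * signs t (flips s bs) = comm_signs s t * (signs t bs * signs s (flips t bs))"
  using assms
proof (induction bs arbitrary: s t)
  case (Cons b bs)
  obtain l s' l' t' where s: "s = l # s'" and t: "t = l' # t'"
    using Cons.prems by (cases s; cases t) auto
  have IH: "signs s' bs * signs t' (flips s' bs) = comm_signs s' t' * (signs t' bs * signs s' (flips t' bs))"
    using Cons.prems s t by (intro Cons.IH) auto
  have "signs s (b # bs) * signs t (flips s (b # bs))
      = (letter_sign l b * letter_sign l' (letter_flip l b)) * (signs s' bs * signs t' (flips s' bs))"
    by (simp add: s t mult_ac)
  also have "\<dots> = (comm_sign l l' * letter_sign l' b * letter_sign l (letter_flip l' b))
                   * (comm_signs s' t' * (signs t' bs * signs s' (flips t' bs)))"
    by (simp only: letter_commutation IH)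
  also have "\<dots> = comm_signs s t * (signs t (b # bs) * signs s (flips t (b # bs)))"
    by (simp add: s t mult_ac)
  finally show ?case .
qed simp

lemma signs_square:
  assumes "length s = length bs"
  shows "signs s bs * signs s (flips s bs) = sq_signs s"
  using assms
proof (induction bs arbitrary: s)
  case (Cons b bs)
  obtain l s' where s: "s = l # s'"
    using Cons.prems by (cases s) auto
  have "signs s (b # bs) * signs s (flips s (b # bs))
      = (letter_sign l b * letter_sign l (letter_flip l b)) * (signs s' bs * signs s' (flips s' bs))"
    by (simp add: s mult_ac)
  also have "\<dots> = sq_sign l * sq_signs s'"
    using Cons s by (simp only: letter_square) simp
  finally show ?case by (simp add: s sq_signs_def)
qed (simp add: sq_signs_def)

lemma comm_signs_append:
  "length s = length t \<Longrightarrow> comm_signs (s @ s') (t @ t') = comm_signs s t * comm_signs s' t'"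
  by (induction s t rule: comm_signs.induct) auto

lemma comm_signs_self: "comm_signs s s = 1"
  by (induction s) (auto simp: comm_sign_def)

lemma comm_signs_sym: "comm_signs s t = comm_signs t s"
  by (induction s t rule: comm_signs.induct) (auto simp: comm_sign_def)

lemma comm_signs_Id2: "comm_signs s (replicate n Id2) = 1"
proof (induction n arbitrary: s)
  case (Suc n)
  then show ?case by (cases s) (auto simp: comm_sign_def)
qed (cases s; simp)

text \<open>The operator of a word on functions of (bit string, extra index); the extra index realises
  the tensor product with an identity matrix.\<close>

definition word_op :: "word \<Rightarrow> (bool list \<times> 'a \<Rightarrow> real) \<Rightarrow> bool list \<times> 'a \<Rightarrow> real" where
  "word_op s w p = signs s (fst p) * w (flips s (fst p), snd p)"

lemma word_op_commutation:
  assumes "length s = length (fst p)" and "length t = length (fst p)"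
  shows "word_op s (word_op t w) p = comm_signs s t * word_op t (word_op s w) p"
proof -
  have "word_op s (word_op t w) p
      = (signs s (fst p) * signs t (flips s (fst p))) * w (flips t (flips s (fst p)), snd p)"
    by (simp add: word_op_def)
  also have "\<dots> = comm_signs s t * word_op t (word_op s w) p"
    by (simp add: word_op_def signs_commutation[OF assms] flips_commute[of t s])
  finally show ?thesis .
qed

lemma word_op_square:
  assumes "length s = length (fst p)"
  shows "word_op s (word_op s w) p = sq_signs s * w p"
  using signs_square[OF assms] by (simp add: word_op_def flips_flips mult.assoc[symmetric])

lemma word_op_linear:
  "word_op s (\<lambda>p. \<Sum>k\<in>D. x k * f k p) p = (\<Sum>k\<in>D. x k * word_op s (f k) p)"
  by (simp add: word_op_def sum_distrib_left mult_ac)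

section \<open>Hurwitz--Radon families of words\<close>

definition hr_family :: "word list \<Rightarrow> nat \<Rightarrow> bool" where
  "hr_family F L \<longleftrightarrow> distinct F \<and> (\<forall>s\<in>set F. length s = L \<and> sq_signs s = -1)
     \<and> (\<forall>s\<in>set F. \<forall>t\<in>set F. s \<noteq> t \<longrightarrow> comm_signs s t = -1)"

text \<open>The empty word squares to +1, so a nonempty family consists of nonempty words.\<close>

lemma hr_family_nonempty_words: "hr_family F L \<Longrightarrow> F \<noteq> [] \<Longrightarrow> L > 0"
  by (cases F) (auto simp: hr_family_def sq_signs_def)

lemma hr_family_append:
  assumes "hr_family A L" and "hr_family B L" and "set A \<inter> set B = {}"
    and "\<And>s t. s \<in> set A \<Longrightarrow> t \<in> set B \<Longrightarrow> comm_signs s t = -1"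
  shows "hr_family (A @ B) L"
  using assms comm_signs_sym unfolding hr_family_def by auto metis+

lemma hr_family_prefix:
  assumes "hr_family F L" and "sq_signs g = 1"
  shows "hr_family (map (\<lambda>s. g @ s) F) (length g + L)"
  using assms by (auto simp: hr_family_def distinct_map inj_on_def sq_signs_def
      comm_signs_append comm_signs_self)

lemma hr_family_pad:
  assumes "hr_family F L"
  shows "hr_family (map (\<lambda>s. s @ replicate n Id2) F) (L + n)"
  using assms by (auto simp: hr_family_def distinct_map inj_on_def sq_signs_def sq_sign_def
      comm_signs_append comm_signs_self)

text \<open>The 8 words of length 4 and the prefix word used in the periodicity step: the prefix
  squares to +1 and anticommutes with all 8 words.\<close>

definition period_words :: "word list" where
  "period_words = [[Id2,Id2,Id2,Rot], [Id2,Id2,Rot,Diag], [Id2,Rot,Id2,Swap], [Id2,Rot,Diag,Diag],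
     [Id2,Rot,Swap,Diag], [Id2,Diag,Rot,Swap], [Diag,Swap,Rot,Swap], [Swap,Swap,Rot,Swap]]"

definition period_prefix :: word where
  "period_prefix = [Rot,Swap,Rot,Swap]"

lemma period_words_family: "hr_family period_words 4"
  by (simp add: hr_family_def period_words_def sq_signs_def sq_sign_def comm_sign_def)

lemma period_prefix_props:
  "length period_prefix = 4" "sq_signs period_prefix = 1" "period_prefix \<notin> set period_words"
  "\<And>g. g \<in> set period_words \<Longrightarrow> comm_signs period_prefix g = -1"
  by (auto simp: period_prefix_def period_words_def sq_signs_def sq_sign_def comm_sign_def)

text \<open>Bott periodicity: from a family of length-L words we get 8 more words of length L + 4.\<close>

definition period_step :: "nat \<Rightarrow> word list \<Rightarrow> word list" where
  "period_step L F = map (\<lambda>s. period_prefix @ s) F @ map (\<lambda>g. g @ replicate L Id2) period_words"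

lemma hr_family_period_step:
  assumes F: "hr_family F L"
  shows "hr_family (period_step L F) (L + 4)"
  unfolding period_step_def
proof (rule hr_family_append)
  show "hr_family (map (\<lambda>s. period_prefix @ s) F) (L + 4)"
    using hr_family_prefix[OF F period_prefix_props(2)] period_prefix_props(1) by (simp add: add.commute)
  show "hr_family (map (\<lambda>g. g @ replicate L Id2) period_words) (L + 4)"
    using hr_family_pad[OF period_words_family] by (simp add: add.commute)
  have len4: "g \<in> set period_words \<Longrightarrow> length g = 4" for g
    using period_words_family by (simp add: hr_family_def)
  show "set (map (\<lambda>s. period_prefix @ s) F) \<inter> set (map (\<lambda>g. g @ replicate L Id2) period_words) = {}"
    using len4 period_prefix_props(1,3) by (force simp: append_eq_append_conv)
  show "comm_signs s t = -1"
    if "s \<in> set (map (\<lambda>s. period_prefix @ s) F)" and "t \<in> set (map (\<lambda>g. g @ replicate L Id2) period_words)"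
    for s t
    using that len4 period_prefix_props(1,4) by (auto simp: comm_signs_append comm_signs_Id2)
qed

fun hr_words :: "nat \<Rightarrow> word list" where
  "hr_words 0 = []"
| "hr_words (Suc 0) = [[Rot]]"
| "hr_words (Suc (Suc 0)) = [[Id2,Rot], [Rot,Diag], [Rot,Swap]]"
| "hr_words (Suc (Suc (Suc 0))) = [[Id2,Id2,Rot], [Id2,Rot,Diag], [Rot,Id2,Swap], [Rot,Diag,Diag],
     [Rot,Swap,Diag], [Diag,Rot,Swap], [Swap,Rot,Swap]]"
| "hr_words (Suc (Suc (Suc (Suc e)))) = period_step e (hr_words e)"

lemma hr_words_family: "hr_family (hr_words e) e"
proof (induction e rule: hr_words.induct)
  case (5 e)
  then have "hr_family (period_step e (hr_words e)) (e + 4)"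
    by (rule hr_family_period_step)
  then show ?case by (simp add: eval_nat_numeral)
qed (simp_all add: hr_family_def sq_signs_def sq_sign_def comm_sign_def)

lemma length_hr_words: "length (hr_words e) = 2 ^ (e mod 4) + 8 * (e div 4) - 1"
  by (induction e rule: hr_words.induct) (simp_all add: period_step_def period_words_def)

section \<open>No real eigenvectors of Clifford combinations\<close>

definition hr_comb :: "word list \<Rightarrow> nat \<Rightarrow> (nat \<Rightarrow> real) \<Rightarrow>
    (bool list \<times> 'a \<Rightarrow> real) \<Rightarrow> bool list \<times> 'a \<Rightarrow> real" where
  "hr_comb F d x w p = (\<Sum>k\<in>{1..d}. x k * word_op (F ! (k - 1)) w p)"

lemma sum_antisymmetric_offdiag:
  fixes A :: "'b \<Rightarrow> 'b \<Rightarrow> real"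
  assumes "finite D" and "\<And>k l. k \<in> D \<Longrightarrow> l \<in> D \<Longrightarrow> k \<noteq> l \<Longrightarrow> A k l = - A l k"
  shows "(\<Sum>k\<in>D. \<Sum>l\<in>D. A k l) = (\<Sum>k\<in>D. A k k)"
proof -
  have "2 * (\<Sum>k\<in>D. \<Sum>l\<in>D. A k l) = (\<Sum>k\<in>D. \<Sum>l\<in>D. A k l) + (\<Sum>k\<in>D. \<Sum>l\<in>D. A l k)"
    using sum.swap[of A D D] by simp
  also have "\<dots> = (\<Sum>k\<in>D. \<Sum>l\<in>D. if l = k then 2 * A k k else 0)"
    unfolding sum.distrib[symmetric]
  proof (intro sum.cong refl)
    fix k l assume "k \<in> D" "l \<in> D"
    then show "A k l + A l k = (if l = k then 2 * A k k else 0)"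
      using assms(2)[of k l] by (cases "l = k") simp_all
  qed
  also have "\<dots> = 2 * (\<Sum>k\<in>D. A k k)"
    using assms(1) by (simp add: sum_distrib_left)
  finally show ?thesis by simp
qed

lemma hr_comb_square:
  assumes F: "hr_family F L" and d: "d \<le> length F" and p: "length (fst p) = L"
  shows "hr_comb F d x (hr_comb F d x w) p = - (\<Sum>k\<in>{1..d}. (x k)\<^sup>2) * w p"
proof -
  define T where "T k = (word_op (F ! (k - 1)) :: (bool list \<times> 'a \<Rightarrow> real) \<Rightarrow> _)" for k
  define A where "A k l = x k * x l * T k (T l w) p" for k l
  have in_F: "k \<in> {1..d} \<Longrightarrow> F ! (k - 1) \<in> set F" for k
    using d by auto
  have len: "k \<in> {1..d} \<Longrightarrow> length (F ! (k - 1)) = length (fst p)" for k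
    using in_F F p by (auto simp: hr_family_def)
  have "hr_comb F d x (hr_comb F d x w) p = (\<Sum>k\<in>{1..d}. \<Sum>l\<in>{1..d}. A k l)"
    by (simp add: hr_comb_def[abs_def] A_def T_def word_op_linear sum_distrib_left mult_ac)
  also have "\<dots> = (\<Sum>k\<in>{1..d}. A k k)"
  proof (rule sum_antisymmetric_offdiag)
    fix k l assume kl: "k \<in> {1..d}" "l \<in> {1..d}" "k \<noteq> l"
    then have "F ! (k - 1) \<noteq> F ! (l - 1)"
      using d F by (auto simp: hr_family_def nth_eq_iff_index_eq)
    then have "comm_signs (F ! (k - 1)) (F ! (l - 1)) = -1"
      using in_F kl F by (auto simp: hr_family_def)
    then show "A k l = - A l k"
      using word_op_commutation[OF len[OF kl(1)] len[OF kl(2)]] by (simp add: A_def T_def)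
  qed simp
  also have "\<dots> = (\<Sum>k\<in>{1..d}. - ((x k)\<^sup>2 * w p))"
  proof (rule sum.cong[OF refl])
    fix k assume k: "k \<in> {1..d}"
    have "sq_signs (F ! (k - 1)) = -1"
      using in_F[OF k] F by (auto simp: hr_family_def)
    then show "A k k = - ((x k)\<^sup>2 * w p)"
      using word_op_square[OF len[OF k]] by (simp add: A_def T_def power2_eq_square)
  qed
  finally show ?thesis by (simp add: sum_distrib_right sum_negf)
qed

text \<open>Consequently a nonzero combination has no real eigenvector: an eigenvalue c would give
  c^2 = -|x|^2 < 0.  The eigen-equation is only needed on words of length L (and any set R of
  extra indices), a set preserved by all the operators.\<close>

lemma hr_comb_no_eigenvector:
  assumes F: "hr_family F L" and d: "d \<le> length F" and x: "\<exists>k\<in>{1..d}. x k \<noteq> 0"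
    and eig: "\<And>bs r. length bs = L \<Longrightarrow> r \<in> R \<Longrightarrow> hr_comb F d x w (bs, r) = c * w (bs, r)"
    and p: "length bs = L" "r \<in> R"
  shows "w (bs, r) = 0"
proof -
  have eig_flipped: "hr_comb F d x w (flips s bs, r) = c * w (flips s bs, r)" for s
    using eig p by simp
  have "hr_comb F d x (hr_comb F d x w) (bs, r)
      = (\<Sum>k\<in>{1..d}. x k * (signs (F ! (k - 1)) bs * (c * w (flips (F ! (k - 1)) bs, r))))"
    by (simp only: hr_comb_def[of F d x "hr_comb F d x w"] word_op_def fst_conv snd_conv eig_flipped)
  also have "\<dots> = c * hr_comb F d x w (bs, r)"
    by (simp add: hr_comb_def word_op_def sum_distrib_left mult_ac)
  finally have "hr_comb F d x (hr_comb F d x w) (bs, r) = c * hr_comb F d x w (bs, r)" .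
  then have "- (\<Sum>k\<in>{1..d}. (x k)\<^sup>2) * w (bs, r) = c\<^sup>2 * w (bs, r)"
    using hr_comb_square[OF F d, of "(bs, r)"] eig[OF p] p by (simp add: power2_eq_square)
  then have "((\<Sum>k\<in>{1..d}. (x k)\<^sup>2) + c\<^sup>2) * w (bs, r) = 0"
    by (simp add: algebra_simps)
  moreover have "(\<Sum>k\<in>{1..d}. (x k)\<^sup>2) > 0"
  proof -
    obtain j where j: "j \<in> {1..d}" "x j \<noteq> 0"
      using x by blast
    then have "0 < (x j)\<^sup>2" by simp
    also have "\<dots> \<le> (\<Sum>k\<in>{1..d}. (x k)\<^sup>2)"
      using j by (intro member_le_sum) auto
    finally show ?thesis .
  qed
  ultimately show ?thesis
    by (metis add_pos_nonneg less_irrefl mult_eq_0_iff zero_le_power2)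
qed

section \<open>The Hurwitz--Radon number and the 2-adic valuation\<close>

lemma rho_multiplicity:
  assumes "k > 0"
  shows "rho k = 2 ^ (multiplicity 2 k mod 4) + 8 * (multiplicity 2 k div 4)"
proof -
  let ?e = "multiplicity (2::nat) k"
  have exponent: "b + 4 * c = ?e" if "k = (2 * a + 1) * 2 ^ (b + 4 * c)" for a b c
  proof -
    have "multiplicity 2 k = b + 4 * c"
      by (rule multiplicity_decomposeI[where x' = "2 * a + 1"]) (use that in \<open>auto simp: mult.commute\<close>)
    then show ?thesis by simp
  qed
  obtain y where y: "k = 2 ^ ?e * y" "\<not> 2 dvd y"
    using multiplicity_decompose'[of k 2] assms by auto
  then obtain a where "y = 2 * a + 1"
    using oddE by blast
  then have decomp: "k = (2 * a + 1) * 2 ^ (?e mod 4 + 4 * (?e div 4))"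
    using y(1) by (simp add: algebra_simps)
  show ?thesis
    unfolding rho_def
  proof (rule the_equality)
    show "\<exists>a b c. k = (2 * a + 1) * 2 ^ (b + 4 * c) \<and> b < 4
                 \<and> 2 ^ (?e mod 4) + 8 * (?e div 4) = 2 ^ b + 8 * c"
      using decomp by (intro exI[of _ a] exI[of _ "?e mod 4"] exI[of _ "?e div 4"]) simp
  next
    fix r assume "\<exists>a b c. k = (2 * a + 1) * 2 ^ (b + 4 * c) \<and> b < 4 \<and> r = 2 ^ b + 8 * c"
    then obtain a b c where abc: "k = (2 * a + 1) * 2 ^ (b + 4 * c)" "b < 4" "r = 2 ^ b + 8 * c"
      by blast
    then have "b + 4 * c = ?e"
      by (intro exponent)
    then have "b = ?e mod 4" "c = ?e div 4"
      using abc(2) by presburger+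
    then show "r = 2 ^ (?e mod 4) + 8 * (?e div 4)"
      using abc(3) by simp
  qed
qed

lemma rho_hr_words: "k > 0 \<Longrightarrow> rho k = length (hr_words (multiplicity 2 k)) + 1"
  by (simp add: rho_multiplicity length_hr_words)

section \<open>Matrix realisation\<close>

text \<open>Indexing the coordinates of R^n by a bijection phi onto an extra point None plus the
  pairs (bit string, extra index), a word becomes a signed permutation matrix on the pairs with a
  zero row and column at None.\<close>

definition word_matrix :: "('n::finite \<Rightarrow> (bool list \<times> 'a) option) \<Rightarrow> word \<Rightarrow> real^'n^'n" where
  "word_matrix \<phi> s = (\<chi> i j. case \<phi> i of None \<Rightarrow> 0
      | Some p \<Rightarrow> (if j = inv \<phi> (Some (flips s (fst p), snd p)) then signs s (fst p) else 0))"

lemma word_matrix_mult: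
  "(word_matrix \<phi> s *v v) $ i
     = (case \<phi> i of None \<Rightarrow> 0 | Some p \<Rightarrow> word_op s (\<lambda>p. v $ inv \<phi> (Some p)) p)"
proof (cases "\<phi> i")
  case (Some p)
  define c where "c = inv \<phi> (Some (flips s (fst p), snd p))"
  have "(word_matrix \<phi> s *v v) $ i = (\<Sum>j\<in>UNIV. word_matrix \<phi> s $ i $ j * v $ j)"
    by (simp add: matrix_vector_mult_def)
  also have "\<dots> = (\<Sum>j\<in>UNIV. if j = c then signs s (fst p) * v $ c else 0)"
    by (intro sum.cong) (auto simp: word_matrix_def Some c_def)
  finally show ?thesis
    by (simp add: Some word_op_def c_def)
qed (simp add: word_matrix_def matrix_vector_mult_def)

lemma sum_scaleR_mult_component:
  fixes A :: "'b \<Rightarrow> real^'n::finite^'n"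
  shows "((\<Sum>k\<in>D. x k *\<^sub>R A k) *v v) $ i = (\<Sum>k\<in>D. x k * (A k *v v) $ i)"
proof -
  have "((\<Sum>k\<in>D. x k *\<^sub>R A k) *v v) $ i = (\<Sum>j\<in>UNIV. \<Sum>k\<in>D. x k * A k $ i $ j * v $ j)"
    by (simp add: matrix_vector_mult_def sum_distrib_right)
  also have "\<dots> = (\<Sum>k\<in>D. \<Sum>j\<in>UNIV. x k * A k $ i $ j * v $ j)"
    by (rule sum.swap)
  finally show ?thesis
    by (simp add: matrix_vector_mult_def sum_distrib_left mult.assoc)
qed

lemma word_matrix_comb:
  "((\<Sum>k\<in>{1..d}. x k *\<^sub>R word_matrix \<phi> (F ! (k - 1))) *v v) $ i
     = (case \<phi> i of None \<Rightarrow> 0 | Some p \<Rightarrow> hr_comb F d x (\<lambda>p. v $ inv \<phi> (Some p)) p)"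
  by (cases "\<phi> i") (simp_all add: sum_scaleR_mult_component word_matrix_mult hr_comb_def)

lemma index_bijection:
  assumes "CARD('n::finite) = Suc (2 ^ L * q)"
  obtains \<phi> :: "'n::finite \<Rightarrow> (bool list \<times> nat) option"
  where "bij_betw \<phi> UNIV (insert None (Some ` ({bs. length bs = L} \<times> {..<q})))"
proof -
  let ?I = "{bs :: bool list. length bs = L} \<times> {..<q}"
  have bits: "finite {bs :: bool list. length bs = L}" "card {bs :: bool list. length bs = L} = 2 ^ L"
    using finite_lists_length_eq[of "UNIV :: bool set" L] card_lists_length_eq[of "UNIV :: bool set" L]
    by simp_all
  then have "finite ?I" "card ?I = 2 ^ L * q"
    by (simp_all add: card_cartesian_product)
  then have card_index: "card (insert None (Some ` ?I)) = CARD('n)"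
    using assms by (simp add: card_image)
  show ?thesis
    using finite_same_card_bij[OF _ _ card_index[symmetric]] \<open>finite ?I\<close> that by auto
qed

definition axial_eigenvectors :: "nat \<Rightarrow> (nat \<Rightarrow> real^'n^'n) \<Rightarrow> 'n::finite \<Rightarrow> bool" where
  "axial_eigenvectors d Y i0 \<longleftrightarrow> (\<forall>x v c. (\<exists>k\<in>{1..d}. x k \<noteq> 0) \<and>
      (\<Sum>k\<in>{1..d}. x k *\<^sub>R Y k) *v v = c *\<^sub>R v \<longrightarrow> (\<forall>i. i \<noteq> i0 \<longrightarrow> v $ i = 0))"

text \<open>Padding a Hurwitz--Radon family of d words of length L, tensored with the identity of size
  q, by one zero row and column gives d matrices of size 2^L q + 1 with axial eigenvectors:
  an eigenvector restricted to the pairs is an eigenvector of hr_comb, hence zero there.\<close>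

lemma hr_matrices:
  assumes F: "hr_family F L" and d: "d \<le> length F" and n: "CARD('n::finite) = Suc (2 ^ L * q)"
  obtains i0 :: "'n::finite" and Y where "axial_eigenvectors d Y i0"
proof -
  let ?I = "{bs :: bool list. length bs = L} \<times> {..<q}"
  obtain \<phi> :: "'n \<Rightarrow> (bool list \<times> nat) option" where \<phi>: "bij_betw \<phi> UNIV (insert None (Some ` ?I))"
    using index_bijection[OF n] .
  have inv_left: "inv \<phi> (\<phi> i) = i" for i
    using bij_betw_inv_into_left[OF \<phi>] by simp
  have inv_right: "\<phi> (inv \<phi> (Some p)) = Some p" if "p \<in> ?I" for p
    using bij_betw_inv_into_right[OF \<phi>] that by simp
  define Y where "Y k = word_matrix \<phi> (F ! (k - 1))" for k
  have "axial_eigenvectors d Y (inv \<phi> None)"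
    unfolding axial_eigenvectors_def
  proof (intro allI impI, elim conjE)
    fix x v c i
    assume x: "\<exists>k\<in>{1..d}. x k \<noteq> 0" and eig: "(\<Sum>k\<in>{1..d}. x k *\<^sub>R Y k) *v v = c *\<^sub>R v"
      and i: "i \<noteq> inv \<phi> None"
    define w where "w = (\<lambda>p. v $ inv \<phi> (Some p))"
    have comb: "((\<Sum>k\<in>{1..d}. x k *\<^sub>R Y k) *v v) $ j
        = (case \<phi> j of None \<Rightarrow> 0 | Some p \<Rightarrow> hr_comb F d x w p)" for j
      unfolding Y_def w_def by (rule word_matrix_comb)
    have eig_w: "hr_comb F d x w (bs, r) = c * w (bs, r)" if "length bs = L" "r \<in> {..<q}" for bs r
      using arg_cong[OF eig, of "\<lambda>u. u $ inv \<phi> (Some (bs, r))"] comb[of "inv \<phi> (Some (bs, r))"]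
        inv_right[of "(bs, r)"] that
      by (simp add: w_def)
    have "\<phi> i \<noteq> None"
    proof
      assume "\<phi> i = None"
      then show False using i inv_left[of i] by simp
    qed
    then obtain bs r where bsr: "\<phi> i = Some (bs, r)" "length bs = L" "r \<in> {..<q}"
      using bij_betw_apply[OF \<phi>, of i] by auto
    have "v $ i = w (bs, r)"
      using inv_left[of i] bsr(1) by (simp add: w_def)
    also have "\<dots> = 0"
      by (rule hr_comb_no_eigenvector[OF F d x eig_w bsr(2,3)])
    finally show "v $ i = 0" .
  qed
  then show ?thesis by (rule that)
qed

text \<open>In odd dimension every Y lies in C: the coefficient vector e_m gives M = -1 of
  determinant -1.\<close>

lemma setC_odd_dim:
  fixes Y :: "nat \<Rightarrow> real^'n::finite^'n"
  assumes "odd CARD('n)"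
  shows "Y \<in> setC m"
proof -
  define a where "a i = (if i = m then 1 else 0 :: real)" for i
  have "(\<Sum>k\<in>{1..m-1}. a k *\<^sub>R Y k) = 0"
    by (intro sum.neutral) (auto simp: a_def)
  then have "Mmat m Y a = - mat 1"
    by (simp add: Mmat_def a_def)
  moreover have "det (- mat 1 :: real^'n^'n) = (\<Prod>i\<in>(UNIV::'n set). -1)"
    by (subst det_diagonal) (simp_all add: mat_def)
  ultimately have "det (Mmat m Y a) = -1"
    using assms by simp
  then show ?thesis
    unfolding setC_def by (intro CollectI exI[of _ a]) simp
qed

text \<open>With axial eigenvectors, V(Y) lies on the line through e_i0: a vector of V(Y) is either
  an eigenvector of a nonzero combination, or killed by a nonzero multiple of the identity.\<close>

lemma setV_axial:
  assumes "axial_eigenvectors (m - 1) Y i0"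
  shows "setV m Y \<subseteq> span {axis i0 (1::real)}"
proof
  fix v assume "v \<in> setV m Y"
  then obtain x where x: "\<exists>i\<in>{1..m}. x i \<noteq> 0"
    and eig: "(\<Sum>k\<in>{1..m-1}. x k *\<^sub>R Y k) *v v = x m *\<^sub>R v"
    unfolding setV_def by blast
  have "\<forall>i. i \<noteq> i0 \<longrightarrow> v $ i = 0"
  proof (cases "\<exists>k\<in>{1..m-1}. x k \<noteq> 0")
    case True
    then show ?thesis using assms eig unfolding axial_eigenvectors_def by blast
  next
    case False
    obtain j where j: "j \<in> {1..m}" "x j \<noteq> 0"
      using x by blast
    with False have "j = m"
      by (cases "j = m") auto
    with j have "x m \<noteq> 0" by simp
    moreover have "(\<Sum>k\<in>{1..m-1}. x k *\<^sub>R Y k) = 0"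
      using False by (intro sum.neutral) auto
    ultimately show ?thesis using eig by simp
  qed
  then have "v = v $ i0 *\<^sub>R axis i0 1"
    by (auto simp: vec_eq_iff axis_def)
  then show "v \<in> span {axis i0 1}"
    by (metis span_base span_mul singletonI)
qed

theorem mainTheorem11:
  fixes m :: nat
  assumes "3 \<le> m" and "m \<le> CARD('n::finite)" and "m \<le> rho (CARD('n) - 1)"
  shows "\<not> (setC m \<subseteq> (setS m :: (nat \<Rightarrow> real^'n^'n) set))"
proof -
  define k where "k = CARD('n) - 1"
  define e where "e = multiplicity 2 k"
  have k: "k > 0" "CARD('n) = Suc k"
    using assms(1,2) by (auto simp: k_def)
  \<comment> \<open>the family of words of length e has rho k - 1 \<ge> m - 1 \<ge> 2 members\<close>
  have F: "hr_family (hr_words e) e" and d: "m - 1 \<le> length (hr_words e)"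
    using hr_words_family assms(3) rho_hr_words[OF k(1)] by (auto simp: e_def k_def)
  have "hr_words e \<noteq> []"
    using d assms(1) by (cases "hr_words e") auto
  then have "e > 0"
    by (rule hr_family_nonempty_words[OF F])
  obtain q where n: "CARD('n) = Suc (2 ^ e * q)"
    using multiplicity_dvd[of 2 k] k(2) by (auto simp: e_def)
  then have "odd CARD('n)"
    using \<open>e > 0\<close> by simp
  obtain i0 Y where "axial_eigenvectors (m - 1) Y (i0 :: 'n)"
    using hr_matrices[OF F d n] .
  then have "dim (setV m Y) \<le> 1"
    using dim_le_card[OF setV_axial] by simp
  then have "Y \<notin> setS m"
    using assms(1,2) by (simp add: setS_def)
  then show ?thesis
    using setC_odd_dim[OF \<open>odd CARD('n)\<close>, of Y m] by blast
qed

end
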